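(* Let $C_4=\langle y\mid y^4=e\rangle$ and $\Delta=\{x,y,z\}$ with $x=y^2$, $z=y^3$ (so $C_\Delta(C_4)$ is the complete graph on four vertices). Then $W=W_xU_x+W_yU_y+W_zU_z$ is a homogeneous scalar quantum walk on $C_\Delta(C_4)$ whenever, for some real $\phi$ and integer $q$, $W_x=\cos\phi$, $W_y=\frac{1+i(-1)^q}{2}\sin\phi$, $W_z=-\frac{1-i(-1)^q}{2}\sin\phi$ and these values are nonzero; in particular the complete graph on four vertices admits such a walk.
   Context: The Cayley graph $C_\Delta(\Gamma)$ has vertex set $\Gamma$ and directed edges $(g,g\delta)$, $g\in\Gamma,\delta\in\Delta$. Let $\ell^2(\Gamma)$ have orthonormal basis $\{|g\rangle\}_{g\in\Gamma}$ and for $\delta\in\Gamma$ let $U_\delta|g\rangle=|g\delta\rangle$. A homogeneous scalar quantum walk on $C_\Delta(\Gamma)$ is a unitary operator $W=\sum_{\delta\in\Delta}W_\delta U_\delta$ with all complex coefficients $W_\delta$ nonzero. *)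

theory Defs
  imports "HOL-Analysis.Analysis" "HOL-Library.Numeral_Type"
begin

text \<open>Finite group \<Gamma> written additively (g\<delta> is g + \<delta>); \<ell>^2(\<Gamma>) is complex ^ 'g,
  and operators on it are matrices complex ^ 'g ^ 'g, with M $ h $ g = <h|M|g>.\<close>

definition shift_op :: "'g::{finite,group_add} \<Rightarrow> complex ^ 'g::{finite,group_add} ^ 'g::{finite,group_add}" where
  "shift_op \<delta> = (\<chi> h g. if h = g + \<delta> then 1 else 0)"

definition adjoint_mat :: "complex ^ 'n ^ 'm \<Rightarrow> complex ^ 'm ^ 'n" where
  "adjoint_mat M = (\<chi> i j. cnj (M $ j $ i))"

definition unitary_mat :: "complex ^ 'n ^ 'n \<Rightarrow> bool" where
  "unitary_mat M \<longleftrightarrow> M ** adjoint_mat M = mat 1 \<and> adjoint_mat M ** M = mat 1"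

definition walk_op :: "'g::{finite,group_add} set \<Rightarrow> ('g \<Rightarrow> complex) \<Rightarrow> complex ^ 'g::{finite,group_add} ^ 'g::{finite,group_add}" where
  "walk_op \<Delta> c = (\<chi> h g. \<Sum>\<delta>\<in>\<Delta>. c \<delta> * shift_op \<delta> $ h $ g)"

definition homogeneous_scalar_qwalk :: "'g::{finite,group_add} set \<Rightarrow> ('g \<Rightarrow> complex) \<Rightarrow> bool" where
  "homogeneous_scalar_qwalk \<Delta> c \<longleftrightarrow> (\<forall>\<delta>\<in>\<Delta>. c \<delta> \<noteq> 0) \<and> unitary_mat (walk_op \<Delta> c)"

end

(* On an abelian group the walk is a convolution: <h|W|g> = w (h - g), where w is the coefficient
   function extended by zero outside \<Delta>. Hence W W* and W* W are both convolution by the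
   autocorrelation d \<mapsto> \<Sum>j. w (j + d) * cnj (w j), so W is unitary iff the autocorrelation is the
   indicator of 0. On C_4 this is one normalisation and two orthogonality equations, which the
   trigonometric family satisfies because (1 + i s)^2 + (1 - i s)^2 = 0 for s = \<plusminus>1. *)

theory Submission
  imports Defs
begin

definition walk_kernel :: "'g set \<Rightarrow> ('g \<Rightarrow> complex) \<Rightarrow> 'g \<Rightarrow> complex" where
  "walk_kernel \<Delta> c \<delta> = (if \<delta> \<in> \<Delta> then c \<delta> else 0)"

definition autocorrelation :: "('g::{finite,plus} \<Rightarrow> complex) \<Rightarrow> 'g \<Rightarrow> complex" where
  "autocorrelation w d = (\<Sum>j\<in>UNIV. w (j + d) * cnj (w j))"

lemma walk_op_nth:
  fixes \<Delta> :: "'g::{finite,group_add} set"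
  shows "walk_op \<Delta> c $ h $ g = walk_kernel \<Delta> c (- g + h)"
proof -
  have "h = g + \<delta> \<longleftrightarrow> \<delta> = - g + h" for \<delta> :: 'g
    by (auto simp: add.assoc[symmetric])
  then show ?thesis
    by (simp add: walk_op_def shift_op_def walk_kernel_def if_distrib[of "(*) _"] cong: if_cong)
qed

lemma sum_translate_UNIV:
  fixes f :: "'g::{finite,group_add} \<Rightarrow> 'a::comm_monoid_add"
  shows "(\<Sum>j\<in>UNIV. f (j + a)) = (\<Sum>j\<in>UNIV. f j)"
  by (rule sum.reindex_bij_betw) (simp add: bij_plus_right bij_betw_def)

lemma sum_reflect_UNIV:
  fixes f :: "'g::{finite,group_add} \<Rightarrow> 'a::comm_monoid_add"
  shows "(\<Sum>j\<in>UNIV. f (a - j)) = (\<Sum>j\<in>UNIV. f j)"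
  by (rule sum.reindex_bij_witness[where i = "\<lambda>j. - j + a" and j = "\<lambda>j. a - j"])
    (auto simp: algebra_simps)

lemma walk_op_mult_adjoint:
  fixes \<Delta> :: "'g::{finite,ab_group_add} set"
  shows "walk_op \<Delta> c ** adjoint_mat (walk_op \<Delta> c) =
    (\<chi> h g. autocorrelation (walk_kernel \<Delta> c) (h - g))"
proof -
  have "(\<Sum>k\<in>UNIV. walk_kernel \<Delta> c (h - k) * cnj (walk_kernel \<Delta> c (g - k)))
      = autocorrelation (walk_kernel \<Delta> c) (h - g)" for h g :: 'g
    using sum_reflect_UNIV[of "\<lambda>k. walk_kernel \<Delta> c (h - k) * cnj (walk_kernel \<Delta> c (g - k))" g]
    by (simp add: autocorrelation_def algebra_simps)
  then show ?thesis
    by (simp add: vec_eq_iff matrix_matrix_mult_def adjoint_mat_def walk_op_nth)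
qed

lemma adjoint_mult_walk_op:
  fixes \<Delta> :: "'g::{finite,ab_group_add} set"
  shows "adjoint_mat (walk_op \<Delta> c) ** walk_op \<Delta> c =
    (\<chi> h g. autocorrelation (walk_kernel \<Delta> c) (h - g))"
proof -
  have "(\<Sum>k\<in>UNIV. cnj (walk_kernel \<Delta> c (k - h)) * walk_kernel \<Delta> c (k - g))
      = autocorrelation (walk_kernel \<Delta> c) (h - g)" for h g :: 'g
    using sum_translate_UNIV[of "\<lambda>k. cnj (walk_kernel \<Delta> c (k - h)) * walk_kernel \<Delta> c (k - g)" h]
    by (simp add: autocorrelation_def algebra_simps)
  then show ?thesis
    by (simp add: vec_eq_iff matrix_matrix_mult_def adjoint_mat_def walk_op_nth)
qed

lemma unitary_walk_op_iff:
  fixes \<Delta> :: "'g::{finite,ab_group_add} set"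
  shows "unitary_mat (walk_op \<Delta> c) \<longleftrightarrow>
    (\<forall>d. autocorrelation (walk_kernel \<Delta> c) d = (if d = 0 then 1 else 0))"
    (is "_ \<longleftrightarrow> (\<forall>d. ?A d = _)")
proof -
  have "unitary_mat (walk_op \<Delta> c) \<longleftrightarrow> (\<forall>h g. ?A (h - g) = (if h = g then 1 else 0))"
    by (simp add: unitary_mat_def walk_op_mult_adjoint adjoint_mult_walk_op vec_eq_iff mat_def)
  also have "\<dots> \<longleftrightarrow> (\<forall>d. ?A d = (if d = 0 then 1 else 0))"
    by (metis diff_0_right diff_eq_diff_eq diff_self)
  finally show ?thesis .
qed

(* C_4 written additively with generator y = 1, so x = y^2 = 2 and z = y^3 = 3;
   a, b, c are the coefficients of x, y, z. *)
definition C4_coeffs :: "complex \<Rightarrow> complex \<Rightarrow> complex \<Rightarrow> 4 \<Rightarrow> complex" where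
  "C4_coeffs a b c = (\<lambda>d. if d = 2 then a else if d = 1 then b else if d = 3 then c else 0)"

lemma autocorrelation_C4_coeffs:
  fixes a b c :: complex
  defines "w \<equiv> walk_kernel {2, 1, 3} (C4_coeffs a b c)"
  shows "autocorrelation w 0 = a * cnj a + b * cnj b + c * cnj c"
    and "autocorrelation w 1 = a * cnj b + c * cnj a"
    and "autocorrelation w 2 = b * cnj c + c * cnj b"
    and "autocorrelation w 3 = cnj (a * cnj b + c * cnj a)"
  by (simp_all add: w_def C4_coeffs_def autocorrelation_def sum_4 walk_kernel_def mult.commute)

lemma unitary_walk_op_C4_iff:
  "unitary_mat (walk_op {2, 1, 3} (C4_coeffs a b c)) \<longleftrightarrow>
    a * cnj a + b * cnj b + c * cnj c = 1 \<and> a * cnj b + c * cnj a = 0 \<and> b * cnj c + c * cnj b = 0"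
proof -
  let ?A = "autocorrelation (walk_kernel {2, 1, 3} (C4_coeffs a b c))"
  have four_eq_zero: "(4::4) = 0"
    by simp
  have "unitary_mat (walk_op {2, 1, 3} (C4_coeffs a b c)) \<longleftrightarrow>
      ?A 0 = 1 \<and> ?A 1 = 0 \<and> ?A 2 = 0 \<and> ?A 3 = 0"
    by (simp add: unitary_walk_op_iff forall_4 four_eq_zero conj_ac)
  then show ?thesis
    by (simp only: autocorrelation_C4_coeffs complex_cnj_zero_iff) auto
qed

lemma unitary_walk_op_C4_family:
  fixes \<phi> :: real and s :: complex
  assumes "s = 1 \<or> s = -1"
  shows "unitary_mat (walk_op {2, 1, 3} (C4_coeffs (cos \<phi>)
    ((1 + \<i> * s) / 2 * sin \<phi>) (- ((1 - \<i> * s) / 2) * sin \<phi>)))"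
  unfolding unitary_walk_op_C4_iff using assms
  by (auto simp: complex_eq_iff algebra_simps power2_eq_square[symmetric])

theorem mainTheorem9:
  fixes \<phi> :: real and q :: int
  defines "Wx \<equiv> complex_of_real (cos \<phi>)"
    and "Wy \<equiv> (1 + \<i> * (-1) ^ nat \<bar>q\<bar>) / 2 * complex_of_real (sin \<phi>)"
    and "Wz \<equiv> - ((1 - \<i> * (-1) ^ nat \<bar>q\<bar>) / 2) * complex_of_real (sin \<phi>)"
  assumes "Wx \<noteq> 0" and "Wy \<noteq> 0" and "Wz \<noteq> 0"
  shows "homogeneous_scalar_qwalk {2::4, 1, 3}
           (\<lambda>d. if d = 2 then Wx else if d = 1 then Wy else if d = 3 then Wz else 0)
       \<and> (\<exists>c. homogeneous_scalar_qwalk {2::4, 1, 3} c)"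
proof -
  have "(-1::complex) ^ nat \<bar>q\<bar> = 1 \<or> (-1::complex) ^ nat \<bar>q\<bar> = -1"
    by (cases "even (nat \<bar>q\<bar>)") auto
  then have "unitary_mat (walk_op {2, 1, 3} (C4_coeffs Wx Wy Wz))"
    unfolding Wx_def Wy_def Wz_def by (rule unitary_walk_op_C4_family)
  then have "homogeneous_scalar_qwalk {2, 1, 3} (C4_coeffs Wx Wy Wz)"
    using assms by (simp add: homogeneous_scalar_qwalk_def C4_coeffs_def)
  then show ?thesis
    unfolding C4_coeffs_def by blast
qed

end
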